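(* Let $\mathcal{G}_n$ be the set of binary words $w=w_1\cdots w_{2n}$ with $n$ zeros and $n$ ones. For $w\in\mathcal{G}_n$ let $o_{00}(w)=|\{i\in[n]: w_{2i-1}w_{2i}=00\}|$, $o_0(w)=|\{i\in[n]: w_{2i-1}=0\}|$, $\#_{001}(w)$ the number of occurrences of $001$ as a consecutive subword of $w$, and $\#_{01}(w)$ the number of occurrences of $01$ as a consecutive subword of $w$. Then there is a bijection $\phi:\mathcal{G}_n\to\mathcal{G}_n$ such that for all $w\in\mathcal{G}_n$, $$o_{00}(w)=\#_{001}(\phi(w))\quad\text{and}\quad o_0(w)=\#_{01}(\phi(w)).$$
   Context: $[n]=\{1,2,\dots,n\}$. *)

theory Defs
  imports Main
begin

text \<open>Binary words are lists over {0,1} (type nat); letter w_j of the paper is w ! (j-1).\<close>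

definition G :: "nat \<Rightarrow> nat list set" where
  "G n = {w. length w = 2 * n \<and> set w \<subseteq> {0, 1} \<and>
              length (filter (\<lambda>x. x = 0) w) = n \<and> length (filter (\<lambda>x. x = 1) w) = n}"

definition o00 :: "nat \<Rightarrow> nat list \<Rightarrow> nat" where
  "o00 n w = card {i \<in> {1..n}. w ! (2*i - 2) = 0 \<and> w ! (2*i - 1) = 0}"

definition o0 :: "nat \<Rightarrow> nat list \<Rightarrow> nat" where
  "o0 n w = card {i \<in> {1..n}. w ! (2*i - 2) = 0}"

definition occ001 :: "nat list \<Rightarrow> nat" where
  "occ001 w = card {i. i + 2 < length w \<and> w ! i = 0 \<and> w ! (i+1) = 0 \<and> w ! (i+2) = 1}"

definition occ01 :: "nat list \<Rightarrow> nat" where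
  "occ01 w = card {i. i + 1 < length w \<and> w ! i = 0 \<and> w ! (i+1) = 1}"

end

theory Submission
  imports Defs
begin

text \<open>
  A binary word v is determined by two codes: the word marking which of its 1s are preceded
  by 0, and the word marking which of its 0s are followed by 1. Both codes contain one 1 per
  factor 01 of v, and every pair of binary words with equally many 1s is the pair of codes of
  a unique word. Moreover the factors 001 of v are exactly the factors 01 of its second code.

  Cut w \<in> G n into its n pairs. Let X mark the pairs starting with 0, A mark which of these
  are 00, and B mark which of the pairs starting with 1 are 11. As w is balanced, A and B
  contain equally many 1s, so they are the codes of a word Y of length n with as many 1s as X;
  then X and Y are the codes of a word \<phi>(w) \<in> G n. Reading the codes backwards inverts \<phi>.
  Counting 1s in the codes gives #01(\<phi>(w)) = #1(X) = o0(w) and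
  #001(\<phi>(w)) = #01(Y) = #1(B) = #1(A) = o00(w).
\<close>

abbreviation zeros :: "nat list \<Rightarrow> nat" where "zeros v \<equiv> length (filter (\<lambda>x. x = 0) v)"
abbreviation ones :: "nat list \<Rightarrow> nat" where "ones v \<equiv> length (filter (\<lambda>x. x = 1) v)"

lemma binary_zeros_plus_ones: "set v \<subseteq> {0, 1} \<Longrightarrow> zeros v + ones v = length v"
  by (induction v) auto

lemma binary_no_ones: "set Y \<subseteq> {0, 1} \<Longrightarrow> ones Y = 0 \<Longrightarrow> Y = replicate (length Y) 0"
  by (induction Y) auto

lemma card_Collect_nat_Suc:
  assumes "finite {i. P (Suc i)}"
  shows "card {i. P i} = of_bool (P 0) + card {i. P (Suc i)}"
proof -
  have "i \<in> {i. i = 0 \<and> P 0} \<union> Suc ` {i. P (Suc i)}" if "P i" for i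
    using that by (cases i) auto
  then have "{i. P i} = {i. i = 0 \<and> P 0} \<union> Suc ` {i. P (Suc i)}"
    by auto
  then show ?thesis
    using assms by (simp add: card_Un_disjoint card_image)
qed

lemma card_atLeast1_atMost_Suc:
  "card {i \<in> {1..Suc n}. P i} = of_bool (P 1) + card {i \<in> {1..n}. P (Suc i)}"
proof -
  have "i \<in> {i. i = 1 \<and> P 1} \<union> Suc ` {i \<in> {1..n}. P (Suc i)}" if "i \<in> {1..Suc n}" "P i" for i
    using that by (cases "i = 1") (auto intro!: image_eqI[of i Suc "i - 1"])
  then have "{i \<in> {1..Suc n}. P i} = {i. i = 1 \<and> P 1} \<union> Suc ` {i \<in> {1..n}. P (Suc i)}"
    by auto
  then show ?thesis
    by (auto simp: card_image card_insert_if)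
qed

lemma occ01_Nil [simp]: "occ01 [] = 0"
  by (simp add: occ01_def)

lemma occ01_Cons [simp]: "occ01 (a # v) = of_bool (a = 0 \<and> take 1 v = [1]) + occ01 v"
proof -
  have "occ01 (a # v) = of_bool (0 + 1 < length (a # v) \<and> a = 0 \<and> (a # v) ! 1 = 1) + occ01 v"
    unfolding occ01_def
    by (subst card_Collect_nat_Suc) (auto intro: finite_subset[where B = "{..<length v}"])
  then show ?thesis by (cases v) auto
qed

lemma occ001_Nil [simp]: "occ001 [] = 0"
  by (simp add: occ001_def)

lemma occ001_Cons [simp]: "occ001 (a # v) = of_bool (a = 0 \<and> take 2 v = [0, 1]) + occ001 v"
proof -
  have "occ001 (a # v) =
      of_bool (0 + 2 < length (a # v) \<and> a = 0 \<and> (a # v) ! 1 = 0 \<and> (a # v) ! 2 = 1) + occ001 v"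
    unfolding occ001_def
    by (subst card_Collect_nat_Suc) (auto intro: finite_subset[where B = "{..<length v}"])
  then show ?thesis by (cases v; cases "tl v") (auto simp: numeral_2_eq_2)
qed

lemma o0_0 [simp]: "o0 0 w = 0" and o00_0 [simp]: "o00 0 w = 0"
  by (simp_all add: o0_def o00_def)

lemma o0_Suc [simp]: "o0 (Suc n) (a # b # u) = of_bool (a = 0) + o0 n u"
proof -
  have "(a # b # u) ! (2 * Suc i - 2) = u ! (2 * i - 2)" if "1 \<le> i" for i
    using that by (cases i) auto
  then show ?thesis
    unfolding o0_def card_atLeast1_atMost_Suc by (auto intro!: arg_cong[where f=card])
qed

lemma o00_Suc [simp]: "o00 (Suc n) (a # b # u) = of_bool (a = 0 \<and> b = 0) + o00 n u"
proof -
  have "(a # b # u) ! (2 * Suc i - 2) = u ! (2 * i - 2)"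
    and "(a # b # u) ! (2 * Suc i - 1) = u ! (2 * i - 1)" if "1 \<le> i" for i
    using that by (cases i; auto)+
  then show ?thesis
    unfolding o00_def card_atLeast1_atMost_Suc by (auto intro!: arg_cong[where f=card])
qed

text \<open>In \<open>ones_code z v\<close> the flag \<open>z\<close> tells whether the letter just before \<open>v\<close> is 0.\<close>

fun ones_code :: "bool \<Rightarrow> nat list \<Rightarrow> nat list" where
  "ones_code z [] = []"
| "ones_code z (a # v) = (if a = 1 then of_bool z # ones_code False v else ones_code True v)"

fun zeros_code :: "nat list \<Rightarrow> nat list" where
  "zeros_code [] = []"
| "zeros_code (a # v) = (if a = 0 then of_bool (take 1 v = [1]) # zeros_code v else zeros_code v)"

fun decode :: "nat list \<Rightarrow> nat list \<Rightarrow> nat list" where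
  "decode [] Y = replicate (length Y) 0"
| "decode (x # X) [] = 1 # decode X []"
| "decode (x # X) (y # Y) =
    (if x = 0 then 1 # decode X (y # Y)
     else if y = 0 then 0 # decode (x # X) Y
     else 0 # 1 # decode X Y)"

lemma binary_ones_code: "set (ones_code z v) \<subseteq> {0, 1}"
  by (induction z v rule: ones_code.induct) auto

lemma length_ones_code: "length (ones_code z v) = ones v"
  by (induction z v rule: ones_code.induct) auto

lemma ones_ones_code:
  "set v \<subseteq> {0, 1} \<Longrightarrow> ones (ones_code z v) = occ01 v + of_bool (z \<and> take 1 v = [1])"
  by (induction z v rule: ones_code.induct) (auto simp: take_Suc)

lemma binary_zeros_code: "set (zeros_code v) \<subseteq> {0, 1}"
  by (induction v) auto

lemma length_zeros_code: "length (zeros_code v) = zeros v"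
  by (induction v) auto

lemma ones_zeros_code: "ones (zeros_code v) = occ01 v"
  by (induction v) auto

lemma occ001_eq_occ01_zeros_code: "set v \<subseteq> {0, 1} \<Longrightarrow> occ001 v = occ01 (zeros_code v)"
proof (induction v rule: induct_list012)
  case (3 a b v)
  then show ?case by (cases v) (auto simp: take_Suc)
qed auto

lemma binary_decode: "set (decode X Y) \<subseteq> {0, 1}"
  by (induction X Y rule: decode.induct) auto

lemma ones_decode: "ones (decode X Y) = length X"
  by (induction X Y rule: decode.induct) auto

lemma zeros_decode: "zeros (decode X Y) = length Y"
  by (induction X Y rule: decode.induct) auto

lemma decode_Cons_0 [simp]: "decode (0 # X) Y = 1 # decode X Y"
  by (cases Y) auto

lemma decode_replicate_zeros: "decode (1 # X) (replicate m 0 @ 1 # Y) = replicate (Suc m) 0 @ 1 # decode X Y"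
  by (induction m) auto

lemma zeros_code_replicate: "zeros_code (replicate r 0) = replicate r 0"
proof (induction r)
  case (Suc r)
  then show ?case by (cases r) auto
qed simp

lemma zeros_code_replicate_1:
  "0 < r \<Longrightarrow> zeros_code (replicate r 0 @ 1 # v) = replicate (r - 1) 0 @ 1 # zeros_code v"
proof (induction r)
  case (Suc r)
  then show ?case by (cases r) auto
qed simp

lemma decode_codes_after_zeros:
  assumes "set v \<subseteq> {0, 1}"
  shows "decode (ones_code (0 < r) v) (zeros_code (replicate r 0 @ v)) = replicate r 0 @ v"
  using assms
proof (induction v arbitrary: r)
  case Nil
  then show ?case by (simp add: zeros_code_replicate)
next
  case (Cons a v)
  consider "a = 0" | "a = 1" "r = 0" | "a = 1" "0 < r"
    using Cons.prems by auto
  then show ?case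
  proof cases
    case 1
    have "replicate r 0 @ a # v = replicate (Suc r) 0 @ v"
      using 1 by (simp add: replicate_app_Cons_same)
    moreover have "ones_code (0 < r) (a # v) = ones_code (0 < Suc r) v"
      using 1 by simp
    ultimately show ?thesis
      using Cons.IH[of "Suc r"] Cons.prems by (simp only:) simp
  next
    case 2
    then show ?thesis using Cons.IH[of 0] Cons.prems by simp
  next
    case 3
    have "decode (ones_code (0 < r) (a # v)) (zeros_code (replicate r 0 @ a # v))
        = decode (1 # ones_code False v) (replicate (r - 1) 0 @ 1 # zeros_code v)"
      using 3 zeros_code_replicate_1[of r v] by simp
    also have "\<dots> = replicate r 0 @ 1 # decode (ones_code False v) (zeros_code v)"
      using 3 decode_replicate_zeros[of "ones_code False v" "r - 1"] by simp
    also have "\<dots> = replicate r 0 @ a # v"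
      using 3 Cons.IH[of 0] Cons.prems by simp
    finally show ?thesis .
  qed
qed

lemma decode_codes: "set v \<subseteq> {0, 1} \<Longrightarrow> decode (ones_code False v) (zeros_code v) = v"
  using decode_codes_after_zeros[of v 0] by simp

lemma ones_code_decode:
  "\<lbrakk>set X \<subseteq> {0, 1}; set Y \<subseteq> {0, 1}; ones X = ones Y; z \<longrightarrow> take 1 X \<noteq> [0]\<rbrakk>
   \<Longrightarrow> ones_code z (decode X Y) = X"
proof (induction X Y arbitrary: z rule: decode.induct)
  case (1 Y)
  then show ?case by (induction Y arbitrary: z) auto
qed (auto split: if_splits)

lemma zeros_code_decode:
  "\<lbrakk>set X \<subseteq> {0, 1}; set Y \<subseteq> {0, 1}; ones X = ones Y\<rbrakk> \<Longrightarrow> zeros_code (decode X Y) = Y"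
proof (induction X Y rule: decode.induct)
  case (1 Y)
  then have "Y = replicate (length Y) 0"
    by (simp add: binary_no_ones)
  then show ?case
    by (metis decode.simps(1) zeros_code_replicate)
next
  case (3 x X y Y)
  then show ?case by (cases Y) (auto split: if_splits)
qed (auto split: if_splits)

fun heads0 :: "nat list \<Rightarrow> nat list" where
  "heads0 (a # b # w) = of_bool (a = 0) # heads0 w"
| "heads0 _ = []"

fun tails0 :: "nat list \<Rightarrow> nat list" where
  "tails0 (a # b # w) = (if a = 0 then of_bool (b = 0) # tails0 w else tails0 w)"
| "tails0 _ = []"

fun tails1 :: "nat list \<Rightarrow> nat list" where
  "tails1 (a # b # w) = (if a = 0 then tails1 w else of_bool (b = 1) # tails1 w)"
| "tails1 _ = []"

fun join_pairs :: "nat list \<Rightarrow> nat list \<Rightarrow> nat list \<Rightarrow> nat list" where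
  "join_pairs [] A B = []"
| "join_pairs (x # X) A B =
    (if x = 1 then 0 # of_bool (hd A \<noteq> 1) # join_pairs X (tl A) B
     else 1 # of_bool (hd B = 1) # join_pairs X A (tl B))"

lemma binary_heads0: "set (heads0 w) \<subseteq> {0, 1}"
  by (induction w rule: heads0.induct) auto

lemma binary_tails0: "set (tails0 w) \<subseteq> {0, 1}"
  by (induction w rule: tails0.induct) auto

lemma binary_tails1: "set (tails1 w) \<subseteq> {0, 1}"
  by (induction w rule: tails1.induct) auto

lemma length_heads0: "length (heads0 w) = length w div 2"
  by (induction w rule: heads0.induct) auto

lemma length_tails0: "length (tails0 w) = ones (heads0 w)"
  by (induction w rule: heads0.induct) auto

lemma length_tails1: "length (tails1 w) = zeros (heads0 w)"
  by (induction w rule: heads0.induct) auto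

lemma zeros_plus_ones_tails1:
  "set w \<subseteq> {0, 1} \<Longrightarrow> even (length w) \<Longrightarrow>
   zeros w + ones (tails1 w) = length w div 2 + ones (tails0 w)"
  by (induction w rule: heads0.induct) auto

lemma o0_eq_ones_heads0: "length w = 2 * n \<Longrightarrow> o0 n w = ones (heads0 w)"
proof (induction n arbitrary: w)
  case (Suc n)
  then obtain a b u where "w = a # b # u" "length u = 2 * n"
    by (cases w rule: heads0.cases) auto
  then show ?case using Suc.IH by simp
qed simp

lemma o00_eq_ones_tails0: "length w = 2 * n \<Longrightarrow> o00 n w = ones (tails0 w)"
proof (induction n arbitrary: w)
  case (Suc n)
  then obtain a b u where "w = a # b # u" "length u = 2 * n"
    by (cases w rule: heads0.cases) auto
  then show ?case using Suc.IH by simp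
qed simp

lemma join_pairs_split:
  "set w \<subseteq> {0, 1} \<Longrightarrow> even (length w) \<Longrightarrow> join_pairs (heads0 w) (tails0 w) (tails1 w) = w"
  by (induction w rule: heads0.induct) auto

lemma split_join_pairs:
  "\<lbrakk>set X \<subseteq> {0, 1}; set A \<subseteq> {0, 1}; set B \<subseteq> {0, 1}; length A = ones X; length B = zeros X\<rbrakk>
   \<Longrightarrow> heads0 (join_pairs X A B) = X \<and> tails0 (join_pairs X A B) = A \<and>
       tails1 (join_pairs X A B) = B"
proof (induction X arbitrary: A B)
  case (Cons x X)
  then show ?case
    by (cases A; cases B) (auto split: if_splits)
qed simp

lemma binary_join_pairs: "set (join_pairs X A B) \<subseteq> {0, 1}"
  by (induction X arbitrary: A B) auto

lemma length_join_pairs: "length (join_pairs X A B) = 2 * length X"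
  by (induction X arbitrary: A B) auto

lemma mem_G_iff: "v \<in> G n \<longleftrightarrow> set v \<subseteq> {0, 1} \<and> zeros v = n \<and> ones v = n"
  using binary_zeros_plus_ones[of v] by (auto simp: G_def)

lemma mem_G_iff_pairs:
  "w \<in> G n \<longleftrightarrow> set w \<subseteq> {0, 1} \<and> length w = 2 * n \<and> ones (tails0 w) = ones (tails1 w)"
  using zeros_plus_ones_tails1[of w] binary_zeros_plus_ones[of w] by (auto simp: G_def)

definition phi :: "nat list \<Rightarrow> nat list" where
  "phi w = decode (heads0 w) (decode (tails0 w) (tails1 w))"

definition psi :: "nat list \<Rightarrow> nat list" where
  "psi v = join_pairs (ones_code False v) (ones_code False (zeros_code v)) (zeros_code (zeros_code v))"

lemma decode_tails:
  assumes "w \<in> G n"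
  defines "Y \<equiv> decode (tails0 w) (tails1 w)"
  shows "set Y \<subseteq> {0, 1}" "length Y = n" "ones Y = ones (heads0 w)"
    and "ones_code False Y = tails0 w" "zeros_code Y = tails1 w"
proof -
  have w: "set w \<subseteq> {0, 1}" "length w = 2 * n" "ones (tails0 w) = ones (tails1 w)"
    using assms(1) by (simp_all add: mem_G_iff_pairs)
  have "ones (heads0 w) + zeros (heads0 w) = n"
    using binary_zeros_plus_ones[of "heads0 w"] binary_heads0[of w] length_heads0[of w] w(2)
    by simp
  then show "set Y \<subseteq> {0, 1}" "length Y = n" "ones Y = ones (heads0 w)"
    using binary_decode ones_decode zeros_decode binary_zeros_plus_ones[of Y]
      length_tails0[of w] length_tails1[of w]
    by (simp_all add: Y_def)
  show "ones_code False Y = tails0 w" "zeros_code Y = tails1 w"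
    using w(3) binary_tails0 binary_tails1 ones_code_decode zeros_code_decode
    by (simp_all add: Y_def)
qed

lemma phi_properties:
  assumes "w \<in> G n"
  shows "phi w \<in> G n \<and> psi (phi w) = w \<and> o00 n w = occ001 (phi w) \<and> o0 n w = occ01 (phi w)"
proof -
  define X Y where "X = heads0 w" and "Y = decode (tails0 w) (tails1 w)"
  note Y = decode_tails[OF assms, folded Y_def X_def]
  have w: "set w \<subseteq> {0, 1}" "length w = 2 * n"
    using assms by (simp_all add: G_def)
  have X: "set X \<subseteq> {0, 1}" "length X = n"
    using binary_heads0 length_heads0 w(2) by (simp_all add: X_def)
  have v: "phi w = decode X Y"
    by (simp add: phi_def X_def Y_def)
  have codes_v: "ones_code False (phi w) = X" "zeros_code (phi w) = Y"
    using X Y ones_code_decode zeros_code_decode by (simp_all add: v)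
  have "phi w \<in> G n"
    using X Y binary_decode[of X Y] ones_decode[of X Y] zeros_decode[of X Y]
    by (simp add: v mem_G_iff)
  moreover have "psi (phi w) = w"
    using w by (simp add: psi_def codes_v Y X_def join_pairs_split)
  moreover have "o0 n w = occ01 (phi w)"
    using w Y ones_zeros_code[of "phi w"] by (simp add: o0_eq_ones_heads0 codes_v X_def)
  moreover have "o00 n w = occ001 (phi w)"
  proof -
    have "o00 n w = ones (zeros_code Y)"
      using w assms by (simp add: o00_eq_ones_tails0 Y mem_G_iff_pairs)
    also have "\<dots> = occ001 (phi w)"
      using ones_zeros_code[of Y] occ001_eq_occ01_zeros_code[OF binary_decode[of X Y]]
      by (simp add: codes_v[unfolded v] v)
    finally show ?thesis .
  qed
  ultimately show ?thesis by blast
qed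

lemma psi_properties:
  assumes "v \<in> G n"
  shows "psi v \<in> G n \<and> phi (psi v) = v"
proof -
  define X Y where "X = ones_code False v" and "Y = zeros_code v"
  define A B where "A = ones_code False Y" and "B = zeros_code Y"
  have v: "set v \<subseteq> {0, 1}" "zeros v = n" "ones v = n"
    using assms by (simp_all add: mem_G_iff)
  have XY: "set X \<subseteq> {0, 1}" "set Y \<subseteq> {0, 1}" "length X = n" "length Y = n" "ones X = ones Y"
    using v binary_ones_code binary_zeros_code length_ones_code length_zeros_code
      ones_ones_code[of v False] ones_zeros_code[of v]
    by (simp_all add: X_def Y_def)
  have AB: "set A \<subseteq> {0, 1}" "set B \<subseteq> {0, 1}" "length A = ones X" "length B = zeros X"
    "ones A = ones B"
    using XY binary_zeros_plus_ones[of X] binary_zeros_plus_ones[of Y] binary_ones_code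
      binary_zeros_code length_ones_code length_zeros_code ones_ones_code[of Y False]
      ones_zeros_code[of Y]
    by (simp_all add: A_def B_def)
  have w: "psi v = join_pairs X A B"
    by (simp add: psi_def X_def Y_def A_def B_def)
  have split_w: "heads0 (psi v) = X" "tails0 (psi v) = A" "tails1 (psi v) = B"
    using split_join_pairs[OF XY(1) AB(1-4)] by (simp_all only: w)
  have "psi v \<in> G n"
    using XY AB binary_join_pairs[of X A B] length_join_pairs[of X A B]
    by (simp add: mem_G_iff_pairs split_w flip: w)
  moreover have "phi (psi v) = v"
    using v binary_zeros_code by (simp add: phi_def split_w A_def B_def X_def Y_def decode_codes)
  ultimately show ?thesis by blast
qed

theorem theorem3p4:
  fixes n :: nat
  shows "\<exists>\<phi>. bij_betw \<phi> (G n) (G n) \<and>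
           (\<forall>w \<in> G n. o00 n w = occ001 (\<phi> w) \<and> o0 n w = occ01 (\<phi> w))"
proof (intro exI conjI)
  show "bij_betw phi (G n) (G n)"
    by (rule bij_betw_byWitness[where f' = psi]) (use phi_properties psi_properties in auto)
  show "\<forall>w \<in> G n. o00 n w = occ001 (phi w) \<and> o0 n w = occ01 (phi w)"
    using phi_properties by blast
qed

end
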